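(* Let $A\in\mathbb R^{n\times n}$ be tridiagonal, $n\ge2$, let $Q\in\mathbb R^{2n\times 2n}$ be the orthogonal matrix produced by Algorithm 1 (described in the context) applied to $A$, and set $Q_1=Q(1{:}n,1{:}n)$, $Q_2=Q(n{+}1{:}2n,1{:}n)$. Then for every $1\le k<n$, both $(Q_1Q_2^{T})(1{:}k,\,k{+}1{:}n)$ and $(Q_1Q_2^{T})(k{+}1{:}n,\,1{:}k)$ have rank at most $2$.
   Context: A Givens rotation on rows $p\ne q$ is an orthogonal matrix $G\in\mathbb R^{2n\times 2n}$ equal to the identity except in the entries $(p,p),(p,q),(q,p),(q,q)$, which form a $2\times2$ rotation $\begin{bmatrix}c&s\\-s&c\end{bmatrix}$, $c^2+s^2=1$. "Rotate rows $p,q$ to annihilate $R(q,j)$" means: choose such a $G$ for which $(G^{T}R)(q,j)=0$ and then update $R\leftarrow G^{T}R$, $Q\leftarrow QG$. Algorithm 1: Initialize $Q=I_{2n}$ and $R=\begin{bmatrix}A\\ I_n\end{bmatrix}\in\mathbb R^{2n\times n}$. First rotate rows $1,n+1$ to annihilate $R(n+1,1)$; then rotate rows $1,2$ to annihilate $R(2,1)$. Then for $i=2,\dots,n$: (a) rotate rows $n+1,n+i$ to annihilate $R(n+i,i)$; (b) rotate rows $i,n+1$ to annihilate $R(n+1,i)$; (c) if $i<n$, rotate rows $i,i+1$ to annihilate $R(i+1,i)$. On output $QR=\begin{bmatrix}A\\ I\end{bmatrix}$ with $R$ upper triangular. Notation $M(a{:}b,c{:}d)$ denotes the submatrix with rows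 $a,\dots,b$ and columns $c,\dots,d$. *)

theory Defs
  imports "Jordan_Normal_Form.DL_Rank_Submatrix"
begin

text \<open>All matrices are Jordan_Normal_Form matrices with 0-based indices.
  A paper index p (1-based) corresponds to index p - 1 here.\<close>

definition tridiagonal :: "real mat \<Rightarrow> bool" where
  "tridiagonal A \<longleftrightarrow> (\<forall>i<dim_row A. \<forall>j<dim_col A. (i > j + 1 \<or> j > i + 1) \<longrightarrow> A $$ (i, j) = 0)"

definition givens :: "nat \<Rightarrow> nat \<Rightarrow> nat \<Rightarrow> real \<Rightarrow> real \<Rightarrow> real mat" where
  "givens m p q c s = mat m m (\<lambda>(i, j).
      if i = p \<and> j = p then c
      else if i = p \<and> j = q then s
      else if i = q \<and> j = p then - s
      else if i = q \<and> j = q then c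
      else if i = j then 1 else 0)"

definition givens_step ::
  "nat \<Rightarrow> nat \<times> nat \<times> nat \<Rightarrow> real mat \<times> real mat \<Rightarrow> real mat \<times> real mat \<Rightarrow> bool" where
  "givens_step m st QR QR' \<longleftrightarrow> (case st of (p, q, j) \<Rightarrow>
     (\<exists>c s. c\<^sup>2 + s\<^sup>2 = 1 \<and>
        (let G = givens m p q c s in
           (transpose_mat G * snd QR) $$ (q, j) = 0 \<and>
           QR' = (fst QR * G, transpose_mat G * snd QR))))"

fun givens_run ::
  "nat \<Rightarrow> (nat \<times> nat \<times> nat) list \<Rightarrow> real mat \<times> real mat \<Rightarrow> real mat \<times> real mat \<Rightarrow> bool" where
  "givens_run m [] QR QR' \<longleftrightarrow> QR' = QR"
| "givens_run m (st # sts) QR QR' \<longleftrightarrow> (\<exists>QR1. givens_step m st QR QR1 \<and> givens_run m sts QR1 QR')"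

text \<open>Paper: (1,n+1,1), (1,2,1), then for i = 2..n:
  (n+1,n+i,i), (i,n+1,i), and (i,i+1,i) if i < n.\<close>
definition alg1_steps :: "nat \<Rightarrow> (nat \<times> nat \<times> nat) list" where
  "alg1_steps n = [(0, n, 0), (0, 1, 0)] @
     concat (map (\<lambda>i. [(n, n + i, i), (i, n, i)] @ (if i < n - 1 then [(i, i + 1, i)] else []))
                 [1..<n])"

definition alg1_Q :: "nat \<Rightarrow> real mat \<Rightarrow> real mat \<Rightarrow> bool" where
  "alg1_Q n A Q \<longleftrightarrow> (\<exists>R. givens_run (2 * n) (alg1_steps n)
       (1\<^sub>m (2 * n), mat (2 * n) n (\<lambda>(i, j). if i < n then A $$ (i, j) else if i - n = j then 1 else 0))
       (Q, R))"

end

theory Submission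
  imports Defs
begin

text \<open>Q is a product of Givens rotations applied to the identity, so
  each column of Q is obtained from unit vectors by mixing only columns that rotations touched.
  Following which columns each stage of Algorithm 1 touches gives two facts:
  column c of Q vanishes outside the rows \<open>0..c+1\<close> and \<open>n..n+c\<close> (Q1 is upper Hessenberg and
  Q2 upper triangular); and on the rows \<open>{..<h} \<union> {n..n+h}\<close> the columns \<open>h..n-1\<close> of Q lie
  in the span of two vectors, the columns h and n as they stand after the rotations of
  stage h.  Writing \<open>Q1 Q2\<^sup>T = \<Sum>\<^sub>c Q1(:,c) Q2(:,c)\<^sup>T\<close>, in the block \<open>(0:k, k:n)\<close> the terms
  with c < k vanish by triangularity of Q2, and the others have left factors in a
  two-dimensional space; the block \<open>(k:n, 0:k)\<close> is symmetric, using the Hessenberg form of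
  Q1 and the span at stage k - 1.  Neither A nor its tridiagonality plays any role: the
  bound depends only on the pattern of rotations.\<close>

lemma dim_givens [simp]: "dim_row (givens m p q c s) = m" "dim_col (givens m p q c s) = m"
  by (simp_all add: givens_def)

lemma givens_carrier_mat [simp]: "givens m p q c s \<in> carrier_mat m m"
  by (simp add: carrier_matI)

lemma col_mult_givens:
  assumes Q: "Q \<in> carrier_mat m m" and pq: "p < m" "q < m" "p \<noteq> q" and j: "j < m"
  shows "col (Q * givens m p q c s) j =
    (if j = p then c \<cdot>\<^sub>v col Q p + (- s) \<cdot>\<^sub>v col Q q
     else if j = q then s \<cdot>\<^sub>v col Q p + c \<cdot>\<^sub>v col Q q
     else col Q j)" (is "_ = ?v")
proof (rule eq_vecI)
  fix i assume "i < dim_vec ?v"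
  then have i: "i < m"
    using Q by (auto split: if_splits)
  have "col (Q * givens m p q c s) j $ i = (\<Sum>t<m. Q $$ (i, t) * givens m p q c s $$ (t, j))"
    using Q i j by (simp add: scalar_prod_def lessThan_atLeast0 del: col_mult)
  also have "\<dots> = (\<Sum>t<m. Q $$ (i, t) * (if t = p then (if j = p then c else if j = q then s else 0)
      else if t = q then (if j = p then - s else if j = q then c else 0)
      else if t = j then 1 else 0))"
    using pq j by (intro sum.cong refl) (auto simp: givens_def)
  also have "\<dots> = (if j = p then c * Q $$ (i, p) - s * Q $$ (i, q)
      else if j = q then s * Q $$ (i, p) + c * Q $$ (i, q) else Q $$ (i, j))"
    using pq j by (auto simp: if_distrib[of "\<lambda>x. Q $$ (i, _) * x"] sum.If_cases lessThan_def)
  also have "\<dots> = ?v $ i"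
    using Q pq i j by simp
  finally show "col (Q * givens m p q c s) j $ i = ?v $ i" .
qed (use Q in auto)

definition givens_steps_wf :: "nat \<Rightarrow> (nat \<times> nat \<times> nat) list \<Rightarrow> bool" where
  "givens_steps_wf m sts \<longleftrightarrow> (\<forall>(p, q, _) \<in> set sts. p < m \<and> q < m \<and> p \<noteq> q)"

definition rotated_indices :: "(nat \<times> nat \<times> nat) list \<Rightarrow> nat set" where
  "rotated_indices sts = (\<Union>(p, q, _) \<in> set sts. {p, q})"

lemma givens_steps_wf_append [simp]:
  "givens_steps_wf m (xs @ ys) \<longleftrightarrow> givens_steps_wf m xs \<and> givens_steps_wf m ys"
  unfolding givens_steps_wf_def set_append ball_Un ..

lemma rotated_indices_append [simp]:
  "rotated_indices (xs @ ys) = rotated_indices xs \<union> rotated_indices ys"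
  unfolding rotated_indices_def by auto

lemma givens_run_append:
  "givens_run m (xs @ ys) QR QR'' \<longleftrightarrow> (\<exists>QR'. givens_run m xs QR QR' \<and> givens_run m ys QR' QR'')"
  by (induction xs arbitrary: QR) auto

lemma givens_run_ConsE:
  assumes "givens_run m ((p, q, j) # sts) (Q, R) (Q', R')"
  obtains c s R1 where "givens_run m sts (Q * givens m p q c s, R1) (Q', R')"
  using assms by (auto simp: givens_step_def Let_def)

lemma givens_run_carrier_mat:
  assumes "givens_run m sts (Q, R) (Q', R')" "Q \<in> carrier_mat m m"
  shows "Q' \<in> carrier_mat m m"
  using assms
proof (induction sts arbitrary: Q R)
  case (Cons st sts)
  obtain p q j where st: "st = (p, q, j)" by (cases st)
  from Cons.prems(1) obtain c s R1 where run: "givens_run m sts (Q * givens m p q c s, R1) (Q', R')"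
    unfolding st by (elim givens_run_ConsE)
  show ?case
    using Cons.IH[OF run mult_carrier_mat[OF Cons.prems(2) givens_carrier_mat]] .
qed simp

lemma givens_run_from_identity_appendE:
  assumes "givens_run m (xs @ ys) (1\<^sub>m m, R0) (Q, R)"
  obtains Qm Rm where "givens_run m xs (1\<^sub>m m, R0) (Qm, Rm)" "givens_run m ys (Qm, Rm) (Q, R)"
    "Qm \<in> carrier_mat m m" "Q \<in> carrier_mat m m"
  using assms givens_run_carrier_mat unfolding givens_run_append by (metis one_carrier_mat surj_pair)

lemma givens_run_col_untouched:
  assumes "givens_run m sts (Q, R) (Q', R')" "Q \<in> carrier_mat m m" "givens_steps_wf m sts"
    and "d \<notin> rotated_indices sts" "d < m"
  shows "col Q' d = col Q d"
  using assms
proof (induction sts arbitrary: Q R)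
  case (Cons st sts)
  obtain p q j where st: "st = (p, q, j)" by (cases st)
  from Cons.prems(1) obtain c s R1 where run: "givens_run m sts (Q * givens m p q c s, R1) (Q', R')"
    unfolding st by (elim givens_run_ConsE)
  have "col Q' d = col (Q * givens m p q c s) d"
    using Cons.prems by (intro Cons.IH[OF run]) (auto simp: st givens_steps_wf_def rotated_indices_def)
  also have "\<dots> = col Q d"
    using Cons.prems by (auto simp: st col_mult_givens givens_steps_wf_def rotated_indices_def)
  finally show ?case .
qed simp

lemma givens_run_col_invariant:
  assumes "givens_run m sts (Q, R) (Q', R')" "Q \<in> carrier_mat m m" "givens_steps_wf m sts"
    and "rotated_indices sts \<subseteq> S"
    and closed: "\<And>x y \<alpha> \<beta>. x \<in> carrier_vec m \<Longrightarrow> y \<in> carrier_vec m \<Longrightarrow> P x \<Longrightarrow> P y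
      \<Longrightarrow> P (\<alpha> \<cdot>\<^sub>v x + \<beta> \<cdot>\<^sub>v y)"
    and "\<forall>d\<in>S. d < m \<longrightarrow> P (col Q d)"
  shows "\<forall>d\<in>S. d < m \<longrightarrow> P (col Q' d)"
  using assms(1-4,6)
proof (induction sts arbitrary: Q R)
  case (Cons st sts)
  obtain p q j where st: "st = (p, q, j)" by (cases st)
  from Cons.prems(1) obtain c s R1 where run: "givens_run m sts (Q * givens m p q c s, R1) (Q', R')"
    unfolding st by (elim givens_run_ConsE)
  have pq: "p < m" "q < m" "p \<noteq> q" "p \<in> S" "q \<in> S"
    using Cons.prems(3,4) by (auto simp: st givens_steps_wf_def rotated_indices_def)
  have cols: "col Q p \<in> carrier_vec m" "col Q q \<in> carrier_vec m"
    using Cons.prems(2) by auto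
  have "\<forall>d\<in>S. d < m \<longrightarrow> P (col (Q * givens m p q c s) d)"
    using Cons.prems(2,5) pq by (auto simp: col_mult_givens intro!: closed[OF cols])
  then show ?case
    using Cons.prems(2-4)
    by (intro Cons.IH[OF run]) (auto simp: st givens_steps_wf_def rotated_indices_def)
qed simp

lemma givens_run_from_identity_col_zero:
  assumes run: "givens_run m sts (1\<^sub>m m, R) (Q, R')" and wf: "givens_steps_wf m sts"
    and T: "rotated_indices sts \<subseteq> T" and d: "d \<in> T" "d < m" and i: "i < m" "i \<notin> T"
  shows "Q $$ (i, d) = 0"
proof -
  let ?P = "\<lambda>x :: real vec. \<forall>i\<in>{..<m} - T. x $ i = 0"
  have "\<forall>d\<in>T. d < m \<longrightarrow> ?P (col Q d)"
    by (rule givens_run_col_invariant[OF run _ wf T]) auto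
  moreover have "Q \<in> carrier_mat m m"
    using run by (rule givens_run_carrier_mat) simp
  ultimately show ?thesis
    using d i by auto
qed

text \<open>The two
  initial rotations of the paper form stage 0, which lacks the first rotation.\<close>

definition alg1_rotations :: "nat \<Rightarrow> nat \<Rightarrow> (nat \<times> nat \<times> nat) list" where
  "alg1_rotations n i = (if i = 0 then [] else [(n, n + i, i)]) @ [(i, n, i)]"

definition alg1_chase :: "nat \<Rightarrow> nat \<Rightarrow> (nat \<times> nat \<times> nat) list" where
  "alg1_chase n i = (if i + 1 < n then [(i, i + 1, i)] else [])"

definition alg1_stage :: "nat \<Rightarrow> nat \<Rightarrow> (nat \<times> nat \<times> nat) list" where
  "alg1_stage n i = alg1_rotations n i @ alg1_chase n i"

lemma alg1_steps_stages:
  assumes "2 \<le> n"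
  shows "alg1_steps n = concat (map (alg1_stage n) [0..<n])"
proof -
  have "[0..<n] = 0 # [1..<n]"
    using assms by (simp add: upt_conv_Cons)
  moreover have "alg1_stage n i = [(n, n + i, i), (i, n, i)] @ (if i < n - 1 then [(i, i + 1, i)] else [])"
    if "1 \<le> i" for i
    using that by (auto simp: alg1_stage_def alg1_rotations_def alg1_chase_def)
  ultimately show ?thesis
    using assms by (auto simp: alg1_steps_def alg1_stage_def alg1_rotations_def alg1_chase_def
        intro!: arg_cong[where f = concat] map_cong)
qed

lemma alg1_steps_split:
  assumes "2 \<le> n" "k \<le> n"
  shows "alg1_steps n = concat (map (alg1_stage n) [0..<k]) @ concat (map (alg1_stage n) [k..<n])"
proof -
  have "[0..<n] = [0..<k] @ [k..<n]"
    using upt_add_eq_append[of 0 k "n - k"] assms(2) by simp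
  then show ?thesis
    using assms(1) by (simp add: alg1_steps_stages)
qed

lemma alg1_steps_split_stage:
  assumes "2 \<le> n" "h < n"
  shows "alg1_steps n = (concat (map (alg1_stage n) [0..<h]) @ alg1_rotations n h)
    @ alg1_chase n h @ concat (map (alg1_stage n) [Suc h..<n])"
  using alg1_steps_split[OF assms(1) less_imp_le[OF assms(2)]] assms(2)
  by (simp add: upt_conv_Cons alg1_stage_def)

lemma rotated_indices_concat_map:
  "rotated_indices (concat (map f xs)) = (\<Union>x\<in>set xs. rotated_indices (f x))"
  by (induction xs) (auto simp: rotated_indices_def)

lemma rotated_indices_alg1:
  "rotated_indices (alg1_rotations n i) = {i, n} \<union> (if i = 0 then {} else {n + i})"
  "rotated_indices (alg1_chase n i) = (if i + 1 < n then {i, i + 1} else {})"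
  "rotated_indices (alg1_stage n i) = rotated_indices (alg1_rotations n i) \<union> rotated_indices (alg1_chase n i)"
  by (auto simp: rotated_indices_def alg1_rotations_def alg1_chase_def alg1_stage_def)

lemma alg1_steps_wf:
  assumes "2 \<le> n"
  shows "givens_steps_wf (2 * n) (alg1_steps n)"
  using assms by (auto simp: alg1_steps_def givens_steps_wf_def)

lemma alg1_Q_zero_entries:
  assumes run: "givens_run (2 * n) (alg1_steps n) (1\<^sub>m (2 * n), R0) (Q, R)" and n: "2 \<le> n"
    and c: "c < n" and i: "i < 2 * n" "c + 1 < i" "i \<notin> {n..n + c}"
  shows "Q $$ (i, c) = 0"
proof -
  let ?pre = "concat (map (alg1_stage n) [0..<Suc c])"
  let ?suf = "concat (map (alg1_stage n) [Suc c..<n])"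
  have split: "alg1_steps n = ?pre @ ?suf"
    using c by (intro alg1_steps_split[OF n]) simp
  have wf: "givens_steps_wf (2 * n) ?pre" "givens_steps_wf (2 * n) ?suf"
    using alg1_steps_wf[OF n] unfolding split by simp_all
  obtain Qm Rm where run_pre: "givens_run (2 * n) ?pre (1\<^sub>m (2 * n), R0) (Qm, Rm)"
    and run_suf: "givens_run (2 * n) ?suf (Qm, Rm) (Q, R)"
    and Qm: "Qm \<in> carrier_mat (2 * n) (2 * n)" and Q: "Q \<in> carrier_mat (2 * n) (2 * n)"
    by (rule givens_run_from_identity_appendE[OF run[unfolded split]])
  have "Q $$ (i, c) = col Q c $ i"
    using Q i c by simp
  also have "\<dots> = col Qm c $ i"
    using c by (subst givens_run_col_untouched[OF run_suf Qm wf(2)])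
      (auto simp: rotated_indices_concat_map rotated_indices_alg1 split: if_splits)
  also have "\<dots> = Qm $$ (i, c)"
    using Qm i c by simp
  also have "\<dots> = 0"
    using c i
    by (intro givens_run_from_identity_col_zero[OF run_pre wf(1), where T = "{..Suc c} \<union> {n..n + c}"])
      (auto simp: rotated_indices_concat_map rotated_indices_alg1 split: if_splits)
  finally show ?thesis .
qed

definition span2_on :: "nat set \<Rightarrow> (nat \<Rightarrow> real) \<Rightarrow> (nat \<Rightarrow> real) \<Rightarrow> real vec \<Rightarrow> bool" where
  "span2_on I a b x \<longleftrightarrow> (\<exists>\<alpha> \<beta>. \<forall>i\<in>I. x $ i = \<alpha> * a i + \<beta> * b i)"

lemma span2_on_lincomb:
  assumes "I \<subseteq> {..<m}" "x \<in> carrier_vec m" "y \<in> carrier_vec m" "span2_on I a b x" "span2_on I a b y"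
  shows "span2_on I a b (\<alpha> \<cdot>\<^sub>v x + \<beta> \<cdot>\<^sub>v y)"
proof -
  obtain \<alpha>1 \<beta>1 \<alpha>2 \<beta>2 where "\<forall>i\<in>I. x $ i = \<alpha>1 * a i + \<beta>1 * b i" "\<forall>i\<in>I. y $ i = \<alpha>2 * a i + \<beta>2 * b i"
    using assms(4,5) unfolding span2_on_def by blast
  then show ?thesis
    using assms(1-3) unfolding span2_on_def
    by (intro exI[of _ "\<alpha> * \<alpha>1 + \<beta> * \<alpha>2"] exI[of _ "\<alpha> * \<beta>1 + \<beta> * \<beta>2"])
      (auto simp: algebra_simps)
qed

text \<open>Right after the rotations of stage h, the columns in \<open>{h..n} \<union> {n+h<..}\<close> other
  than h and n are still unit vectors, vanishing on these rows; all later rotations act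
  within that set of columns.\<close>
lemma alg1_Q_cols_span2:
  assumes run: "givens_run (2 * n) (alg1_steps n) (1\<^sub>m (2 * n), R0) (Q, R)" and n: "2 \<le> n"
    and h: "h < n"
  shows "\<exists>a b. \<forall>c\<in>{h..<n}. \<exists>\<alpha> \<beta>. \<forall>i \<in> {..<h} \<union> {n..n + h}. Q $$ (i, c) = \<alpha> * a i + \<beta> * b i"
proof -
  let ?pre = "concat (map (alg1_stage n) [0..<h]) @ alg1_rotations n h"
  let ?suf = "alg1_chase n h @ concat (map (alg1_stage n) [Suc h..<n])"
  let ?S = "{h..n} \<union> {n + h<..}" and ?I = "{..<h} \<union> {n..n + h}"
  have split: "alg1_steps n = ?pre @ ?suf"
    by (rule alg1_steps_split_stage[OF n h])
  have wf: "givens_steps_wf (2 * n) ?pre" "givens_steps_wf (2 * n) ?suf"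
    using alg1_steps_wf[OF n] unfolding split by simp_all
  obtain Qm Rm where run_pre: "givens_run (2 * n) ?pre (1\<^sub>m (2 * n), R0) (Qm, Rm)"
    and run_suf: "givens_run (2 * n) ?suf (Qm, Rm) (Q, R)"
    and Qm: "Qm \<in> carrier_mat (2 * n) (2 * n)" and Q: "Q \<in> carrier_mat (2 * n) (2 * n)"
    by (rule givens_run_from_identity_appendE[OF run[unfolded split]])
  have I: "?I \<subseteq> {..<2 * n}"
    using h by auto
  let ?a = "\<lambda>i. Qm $$ (i, h)" and ?b = "\<lambda>i. Qm $$ (i, n)"
  have "span2_on ?I ?a ?b (col Qm c)" if c: "c \<in> ?S" "c < 2 * n" for c
  proof -
    consider "c = h" | "c = n" | "c \<noteq> h" "c \<noteq> n" by blast
    then show ?thesis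
    proof cases
      case 1
      then show ?thesis
        using Qm I h unfolding span2_on_def by (intro exI[of _ 1] exI[of _ 0]) auto
    next
      case 2
      then show ?thesis
        using Qm I n unfolding span2_on_def by (intro exI[of _ 0] exI[of _ 1]) auto
    next
      case 3
      have "col Qm c = col (1\<^sub>m (2 * n)) c"
        using c 3 by (intro givens_run_col_untouched[OF run_pre _ wf(1)])
          (auto simp: rotated_indices_concat_map rotated_indices_alg1 split: if_splits)
      then show ?thesis
        using c 3 I unfolding span2_on_def by (intro exI[of _ 0] exI[of _ 0]) auto
    qed
  qed
  then have "\<forall>c\<in>?S. c < 2 * n \<longrightarrow> span2_on ?I ?a ?b (col Q c)"
    by (intro givens_run_col_invariant[OF run_suf Qm wf(2)] span2_on_lincomb[OF I])
      (auto simp: rotated_indices_concat_map rotated_indices_alg1 split: if_splits)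
  then show ?thesis
    using Q I h unfolding span2_on_def by (intro exI[of _ ?a] exI[of _ ?b]) (auto simp: subset_eq)
qed

lemma rank_le_2_if_sum_of_two_products:
  fixes B :: "real mat"
  assumes B: "B \<in> carrier_mat r s"
    and entries: "\<And>i j. i < r \<Longrightarrow> j < s \<Longrightarrow> B $$ (i, j) = f1 i * g1 j + f2 i * g2 j"
  shows "vec_space.rank r B \<le> 2"
proof -
  let ?B1 = "mat r s (\<lambda>(i, j). f1 i * g1 j)"
  let ?B2 = "mat r s (\<lambda>(i, j). f2 i * g2 j)"
  have "B = ?B1 + ?B2"
    by (rule eq_matI) (use B entries in auto)
  moreover have "vec_space.rank r (?B1 + ?B2) \<le> vec_space.rank r ?B1 + vec_space.rank r ?B2"
    by (rule vec_space.rank_subadditive) auto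
  moreover have "vec_space.rank r ?B1 \<le> 1" "vec_space.rank r ?B2 \<le> 1"
    by (rule vec_space.rank_le_1_product_entries[of _ _ s]; auto)+
  ultimately show ?thesis
    by simp
qed

lemma pick_atLeastLessThan: "a + j < b \<Longrightarrow> pick {a..<b} j = a + j"
  by (induction j) (auto intro!: Least_equality)

lemma submatrix_atLeastLessThan:
  assumes "M \<in> carrier_mat m n" "b \<le> m" "d \<le> n"
  shows "submatrix M {a..<b} {c..<d} \<in> carrier_mat (b - a) (d - c)"
    and "i < b - a \<Longrightarrow> j < d - c \<Longrightarrow> submatrix M {a..<b} {c..<d} $$ (i, j) = M $$ (a + i, c + j)"
proof -
  have "{i. i < dim_row M \<and> i \<in> {a..<b}} = {a..<b}" "{j. j < dim_col M \<and> j \<in> {c..<d}} = {c..<d}"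
    using assms by auto
  then have rows: "card {i. i < dim_row M \<and> i \<in> {a..<b}} = b - a"
    and cols: "card {j. j < dim_col M \<and> j \<in> {c..<d}} = d - c"
    by simp_all
  show "submatrix M {a..<b} {c..<d} \<in> carrier_mat (b - a) (d - c)"
    by (intro carrier_matI) (simp_all only: dim_submatrix rows cols)
  assume "i < b - a" "j < d - c"
  then show "submatrix M {a..<b} {c..<d} $$ (i, j) = M $$ (a + i, c + j)"
    by (simp only: submatrix_index rows cols pick_atLeastLessThan less_diff_conv add.commute)
qed

lemma alg1_upper_block_rank_le_2:
  assumes run: "givens_run (2 * n) (alg1_steps n) (1\<^sub>m (2 * n), R0) (Q, R)" and n: "2 \<le> n"
    and k: "k < n"
    and M: "M \<in> carrier_mat n n" "\<And>i j. i < n \<Longrightarrow> j < n \<Longrightarrow> M $$ (i, j) = (\<Sum>c<n. Q $$ (i, c) * Q $$ (n + j, c))"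
  shows "vec_space.rank k (submatrix M {..<k} {k..<n}) \<le> 2"
proof -
  obtain a b where "\<forall>c\<in>{k..<n}. \<exists>\<alpha> \<beta>. \<forall>i\<in>{..<k} \<union> {n..n + k}. Q $$ (i, c) = \<alpha> * a i + \<beta> * b i"
    using alg1_Q_cols_span2[OF run n k] by blast
  then obtain \<alpha> \<beta> where span: "\<And>c i. c \<in> {k..<n} \<Longrightarrow> i < k \<Longrightarrow> Q $$ (i, c) = \<alpha> c * a i + \<beta> c * b i"
    by (metis UnI1 lessThan_iff)
  show ?thesis
    unfolding lessThan_atLeast0
  proof (rule rank_le_2_if_sum_of_two_products)
    show "submatrix M {0..<k} {k..<n} \<in> carrier_mat k (n - k)"
      using submatrix_atLeastLessThan(1)[OF M(1), where a = 0 and b = k and c = k and d = n] k by simp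
    fix i j assume ij: "i < k" "j < n - k"
    have "submatrix M {0..<k} {k..<n} $$ (i, j) = (\<Sum>c<n. Q $$ (i, c) * Q $$ (n + (k + j), c))"
      using submatrix_atLeastLessThan(2)[OF M(1)] ij k by (simp add: M(2))
    also have "\<dots> = (\<Sum>c\<in>{k..<n}. Q $$ (i, c) * Q $$ (n + (k + j), c))"
      using ij by (intro sum.mono_neutral_right) (auto intro!: alg1_Q_zero_entries[OF run n])
    also have "\<dots> = (\<Sum>c\<in>{k..<n}. (\<alpha> c * a i + \<beta> c * b i) * Q $$ (n + (k + j), c))"
      using ij by (intro sum.cong) (auto simp: span)
    also have "\<dots> = a i * (\<Sum>c\<in>{k..<n}. \<alpha> c * Q $$ (n + (k + j), c))
        + b i * (\<Sum>c\<in>{k..<n}. \<beta> c * Q $$ (n + (k + j), c))"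
      by (simp add: sum_distrib_left sum.distrib algebra_simps)
    finally show "submatrix M {0..<k} {k..<n} $$ (i, j) = \<dots>" .
  qed
qed

lemma alg1_lower_block_rank_le_2:
  assumes run: "givens_run (2 * n) (alg1_steps n) (1\<^sub>m (2 * n), R0) (Q, R)" and n: "2 \<le> n"
    and k: "1 \<le> k" "k < n"
    and M: "M \<in> carrier_mat n n" "\<And>i j. i < n \<Longrightarrow> j < n \<Longrightarrow> M $$ (i, j) = (\<Sum>c<n. Q $$ (i, c) * Q $$ (n + j, c))"
  shows "vec_space.rank (n - k) (submatrix M {k..<n} {..<k}) \<le> 2"
proof -
  obtain h where h: "k = Suc h"
    using k(1) by (cases k) auto
  obtain a b where "\<forall>c\<in>{h..<n}. \<exists>\<alpha> \<beta>. \<forall>i\<in>{..<h} \<union> {n..n + h}. Q $$ (i, c) = \<alpha> * a i + \<beta> * b i"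
    using alg1_Q_cols_span2[OF run n, of h] k h by auto
  then have "\<forall>c\<in>{h..<n}. \<exists>\<alpha> \<beta>. \<forall>j\<le>h. Q $$ (n + j, c) = \<alpha> * a (n + j) + \<beta> * b (n + j)"
    by fastforce
  then obtain \<alpha> \<beta> where span: "\<And>c j. c \<in> {h..<n} \<Longrightarrow> j \<le> h \<Longrightarrow> Q $$ (n + j, c) = \<alpha> c * a (n + j) + \<beta> c * b (n + j)"
    by metis
  show ?thesis
    unfolding lessThan_atLeast0
  proof (rule rank_le_2_if_sum_of_two_products)
    show "submatrix M {k..<n} {0..<k} \<in> carrier_mat (n - k) k"
      using submatrix_atLeastLessThan(1)[OF M(1), where a = k and b = n and c = 0 and d = k] k by simp
    fix i j assume ij: "i < n - k" "j < k"
    have "submatrix M {k..<n} {0..<k} $$ (i, j) = (\<Sum>c<n. Q $$ (k + i, c) * Q $$ (n + j, c))"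
      using submatrix_atLeastLessThan(2)[OF M(1)] ij k by (simp add: M(2))
    also have "\<dots> = (\<Sum>c\<in>{h..<n}. Q $$ (k + i, c) * Q $$ (n + j, c))"
      using ij h by (intro sum.mono_neutral_right) (auto intro!: alg1_Q_zero_entries[OF run n])
    also have "\<dots> = (\<Sum>c\<in>{h..<n}. Q $$ (k + i, c) * (\<alpha> c * a (n + j) + \<beta> c * b (n + j)))"
      using ij h by (intro sum.cong) (auto simp: span)
    also have "\<dots> = (\<Sum>c\<in>{h..<n}. Q $$ (k + i, c) * \<alpha> c) * a (n + j)
        + (\<Sum>c\<in>{h..<n}. Q $$ (k + i, c) * \<beta> c) * b (n + j)"
      by (simp add: sum_distrib_right sum.distrib distrib_left mult.assoc)
    finally show "submatrix M {k..<n} {0..<k} $$ (i, j) = \<dots>" .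
  qed
qed

theorem theorem4p2:
  fixes n :: nat and A Q :: "real mat"
  assumes "n \<ge> 2"
    and "A \<in> carrier_mat n n"
    and "tridiagonal A"
    and "alg1_Q n A Q"
  shows "\<forall>k. 1 \<le> k \<and> k < n \<longrightarrow>
    (let Q1 = mat n n (\<lambda>(i, j). Q $$ (i, j));
         Q2 = mat n n (\<lambda>(i, j). Q $$ (n + i, j));
         M = Q1 * transpose_mat Q2
     in vec_space.rank k (submatrix M {..<k} {k..<n}) \<le> 2 \<and>
        vec_space.rank (n - k) (submatrix M {k..<n} {..<k}) \<le> 2)"
proof -
  from assms(4) obtain R0 R where run: "givens_run (2 * n) (alg1_steps n) (1\<^sub>m (2 * n), R0) (Q, R)"
    unfolding alg1_Q_def by blast
  define M where "M = mat n n (\<lambda>(i, j). Q $$ (i, j)) * transpose_mat (mat n n (\<lambda>(i, j). Q $$ (n + i, j)))"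
  have M: "M \<in> carrier_mat n n" "\<And>i j. i < n \<Longrightarrow> j < n \<Longrightarrow> M $$ (i, j) = (\<Sum>c<n. Q $$ (i, c) * Q $$ (n + j, c))"
    unfolding M_def by (auto simp: scalar_prod_def lessThan_atLeast0)
  have "vec_space.rank k (submatrix M {..<k} {k..<n}) \<le> 2 \<and>
      vec_space.rank (n - k) (submatrix M {k..<n} {..<k}) \<le> 2" if "1 \<le> k" "k < n" for k
    using alg1_upper_block_rank_le_2[OF run assms(1) _ M] alg1_lower_block_rank_le_2[OF run assms(1) _ _ M] that
    by blast
  then show ?thesis
    unfolding M_def Let_def by blast
qed

end
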